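(* Consider the one-dimensional elliptic optimal control problem with random inputs $\xi=(\xi_1,\xi_2,\xi_3,\xi_4)\in[-1,1]^4$ described in the context, discretized in space by $\hat N$ nodal finite element basis functions, and consider the linear system solved in the final iteration of the approximate Newton method, namely, for every $\xi$, $$ \begin{bmatrix} \mathbf{M}_y & 0 & \mathbf{A}(\xi_1) \\ 0 & \mathbf{M}_u & -\mathbf{B}^\top \\ \mathbf{A}(\xi_1) & -\mathbf{B} & 0 \end{bmatrix} \begin{bmatrix} \mathbf{y}(\xi) \\ \mathbf{u}(\xi) \\ \boldsymbol\lambda(\xi) \end{bmatrix} = \begin{bmatrix} \mathbf{M}_y\mathbf{y}_d \\ 0 \\ -\mathbf{g}(\xi_2) - \mathbf{b}_3(\xi_3) - \mathbf{b}_4(\xi_4) \end{bmatrix}, $$ with $\mathbf{y}(\xi),\mathbf{u}(\xi),\boldsymbol\lambda(\xi)\in\mathbb{R}^{\hat N}$. Then the solution admits an exact (block) tensor-train decomposition of TT ranks not greater than $7$: there exist a matrix-valued function $Z^{(1)}(\xi_1)\in\mathbb{R}^{3\hat N\times r_1}$ and matrix-valued functions $z^{(k)}(\xi_k)\in\mathbb{R}^{r_{k-1}\times r_k}$, $k=2,3,4$, with $r_4=1$ and $r_1,r_2,r_3\le 7$, such that for all $\xi$ $$ \begin{bmatrix} \mathbf{y}(\xi) \\ \mathbf{u}(\xi) \\ \boldsymbol\lambda(\xi) \end{bmatrix} = Z^{(1)}(\xi_1)\, z^{(2)}(\xi_2)\, z^{(3)}(\xi_3)\, z^{(4)}(\xi_4).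 $$
   Context: The underlying problem: minimize $\mathbb{E}\big[\tfrac12\|y(\cdot,\xi)-y_d\|^2_{L^2(D)} + \tfrac{\alpha}{2}\|u(\cdot,\xi)\|^2_{L^2(D)}\big] + \beta\int_D\big(\int_\Xi u(x,\xi)^2\rho(\xi)d\xi+\varepsilon^2\big)^{1/2}dx$ subject to $\nu(\xi)\Delta y(x,\xi) = g(x,\xi)+u(x,\xi)$ on $D=(0,1)$, with $\nu(\xi)=10^{\xi_1-2}$, $g(x,\xi)=\xi_2/100$, boundary conditions $y|_{x=0}=-1-\xi_3/1000$, $y|_{x=1}=-(2+\xi_4)/1000$, $\xi\sim\mathcal{U}(-1,1)^4$, $y_d(x)=-\sin(50x/\pi)$, $\alpha,\beta\ge0$, $\varepsilon>0$. In the discretized linear system: $\mathbf{M}_y\in\mathbb{R}^{\hat N\times\hat N}$ is the (symmetric positive definite, $\xi$-independent) state mass matrix; $\mathbf{A}(\xi_1)$ is the symmetric invertible stiffness matrix of $\nu(\xi_1)\Delta$ (depending only on $\xi_1$); $\mathbf{B}$ is the $\xi$-independent actuator matrix; $\mathbf{y}_d$ is the $\xi$-independent discretized desired state; $\mathbf{g}(\xi_2)$ is the discretized source depending only on $\xi_2$; $\mathbf{b}_3(\xi_3)$ and $\mathbf{b}_4(\xi_4)$ are the right-hand-side contributions of the left and right boundary conditions, depending only on $\xi_3$ and $\xi_4$ respectively; $\mathbf{M}_u$ is the control block of the approximate Hessian, $\mathbf{M}_u=\alpha\mathbf{M} + \mathrm{diag}_i\big(\beta\hat w_i/\sqrt{\sum_{j}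 w_j (u^{\mathrm{prev}}_{i,j})^2+\varepsilon^2}\big)$ with $\mathbf{M}$ the control mass matrix, $\hat w_i>0$ spatial quadrature weights, $w_j>0$ random-variable quadrature weights and $u^{\mathrm{prev}}$ the previous iterate; it is symmetric positive definite and independent of $\xi$. TT ranks refer to the sizes $r_k$ of the inner summation indices in the factorization, with the spatial index carried by the first factor. *)

theory Defs
  imports "Jordan_Normal_Form.Matrix"
begin

definition spd_mat :: "nat \<Rightarrow> real mat \<Rightarrow> bool" where
  "spd_mat n M \<longleftrightarrow> M \<in> carrier_mat n n \<and> transpose_mat M = M \<and>
     (\<forall>x \<in> carrier_vec n. x \<noteq> 0\<^sub>v n \<longrightarrow> x \<bullet> (M *\<^sub>v x) > 0)"

abbreviation I1 :: "real set" where "I1 \<equiv> {-1..1}"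

end

theory Submission
  imports Defs
begin

(* For fixed xi1 the KKT matrix K = [My 0 A; 0 Mu -B^T; A -B 0] is nonsingular: for a
   homogeneous solution, y^T My y + u^T Mu u = - y^T A lambda + u^T B^T lambda = 0 because A is
   symmetric, so y = u = 0 by positive definiteness, and then lambda = 0 because A is invertible.
   The right-hand side is affine in (xi2, xi3, xi4), hence so is the unique solution s, i.e. s
   equals its affine interpolant
     s(0) + xi2 (s(e1) - s(0)) + xi3 (s(e2) - s(0)) + xi4 (s(e3) - s(0)).
   This is Z1(xi1) times the column (1, xi2, xi3, xi4), which factors through cores of sizes
   4 x 3, 3 x 2 and 2 x 1, giving TT ranks 4, 3, 2. *)

lemma minus_vec_eq_zero_iff:
  assumes "v \<in> carrier_vec n" "w \<in> carrier_vec n"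
  shows "v - w = 0\<^sub>v n \<longleftrightarrow> v = (w :: 'a :: ab_group_add vec)"
  using assms by (auto simp: vec_eq_iff)

lemma mult_mat_vec_zero_vec [simp]: "A \<in> carrier_mat nr n \<Longrightarrow> A *\<^sub>v 0\<^sub>v n = 0\<^sub>v nr"
  by (auto simp: vec_eq_iff)

lemma zero_mat_mult_vec [simp]: "v \<in> carrier_vec n \<Longrightarrow> 0\<^sub>m nr n *\<^sub>v v = 0\<^sub>v nr"
  by (auto simp: vec_eq_iff)

lemma append_vec_dim_0 [simp]: "w \<in> carrier_vec 0 \<Longrightarrow> v @\<^sub>v w = v"
  by (auto simp: vec_eq_iff)

lemma zero_vec_append_vec: "0\<^sub>v n @\<^sub>v 0\<^sub>v m = 0\<^sub>v (n + m)"
  by (auto simp: vec_eq_iff)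

lemma append3_carrier_vec:
  "a \<in> carrier_vec n \<Longrightarrow> b \<in> carrier_vec n \<Longrightarrow> c \<in> carrier_vec n \<Longrightarrow>
    a @\<^sub>v b @\<^sub>v c \<in> carrier_vec (3 * n)"
  unfolding carrier_vec_def by simp

lemma append3_vec_affine_comb:
  assumes "a \<in> carrier_vec n" "b \<in> carrier_vec n"
    "c0 \<in> carrier_vec n" "c1 \<in> carrier_vec n" "c2 \<in> carrier_vec n" "c3 \<in> carrier_vec n"
  shows "a @\<^sub>v b @\<^sub>v (c0 + p \<cdot>\<^sub>v c1 + q \<cdot>\<^sub>v c2 + r \<cdot>\<^sub>v c3) =
    (a @\<^sub>v b @\<^sub>v c0) + p \<cdot>\<^sub>v (0\<^sub>v n @\<^sub>v 0\<^sub>v n @\<^sub>v c1)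
      + q \<cdot>\<^sub>v (0\<^sub>v n @\<^sub>v 0\<^sub>v n @\<^sub>v c2) + r \<cdot>\<^sub>v (0\<^sub>v n @\<^sub>v 0\<^sub>v n @\<^sub>v (c3 :: real vec))"
  using assms by (auto simp: vec_eq_iff)

lemma invertible_mat_mult_vec_eq_zero:
  fixes A :: "'a :: comm_ring_1 mat"
  assumes A: "A \<in> carrier_mat n n" and inv: "invertible_mat A"
    and v: "v \<in> carrier_vec n" and Av: "A *\<^sub>v v = 0\<^sub>v n"
  shows "v = 0\<^sub>v n"
proof -
  obtain C where CA: "C * A = 1\<^sub>m (dim_row C)" and AC: "A * C = 1\<^sub>m (dim_row A)"
    using inv unfolding invertible_mat_def inverts_mat_def by blast
  have C: "C \<in> carrier_mat n n"
    using A CA AC by (metis carrier_matD carrier_matI index_mult_mat(2,3) index_one_mat(2,3))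
  have "v = (C * A) *\<^sub>v v" using CA C v by simp
  also have "\<dots> = C *\<^sub>v (A *\<^sub>v v)" using A C v by simp
  also have "\<dots> = 0\<^sub>v n" using Av C by auto
  finally show ?thesis .
qed

lemma spd_mat_quadratic_form_nonneg:
  assumes "spd_mat n M" "v \<in> carrier_vec n"
  shows "0 \<le> v \<bullet> (M *\<^sub>v v)"
  using assms unfolding spd_mat_def
  by (cases "v = 0\<^sub>v n") (auto intro: less_imp_le)

lemma spd_mat_quadratic_form_eq_zero:
  assumes "spd_mat n M" "v \<in> carrier_vec n" "v \<bullet> (M *\<^sub>v v) = 0"
  shows "v = 0\<^sub>v n"
  using assms unfolding spd_mat_def by force

(* [My 0 A; 0 Mu -B^T; A -B 0], with the blocks grouped as y | (u, lambda) to match the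
   vector y @v u @v lambda. *)
definition kkt_mat :: "nat \<Rightarrow> real mat \<Rightarrow> real mat \<Rightarrow> real mat \<Rightarrow> real mat \<Rightarrow> real mat" where
  "kkt_mat n My Mu B A =
     four_block_mat My (four_block_mat (0\<^sub>m n n) A (0\<^sub>m 0 n) (0\<^sub>m 0 n))
       (0\<^sub>m n n @\<^sub>r A) (four_block_mat Mu (- transpose_mat B) (- B) (0\<^sub>m n n))"

lemma kkt_mat_carrier:
  assumes "My \<in> carrier_mat n n" "Mu \<in> carrier_mat n n" "B \<in> carrier_mat n n" "A \<in> carrier_mat n n"
  shows "kkt_mat n My Mu B A \<in> carrier_mat (3 * n) (3 * n)"
proof -
  have "kkt_mat n My Mu B A \<in> carrier_mat (n + (n + n)) (n + (n + n))"
    unfolding kkt_mat_def using assms by (intro four_block_carrier_mat) auto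
  moreover have "n + (n + n) = 3 * n" by simp
  ultimately show ?thesis by simp
qed

lemma kkt_mat_mult_vec:
  assumes My: "My \<in> carrier_mat n n" and Mu: "Mu \<in> carrier_mat n n"
    and B: "B \<in> carrier_mat n n" and A: "A \<in> carrier_mat n n"
    and y: "y \<in> carrier_vec n" and u: "u \<in> carrier_vec n" and l: "l \<in> carrier_vec n"
  shows "kkt_mat n My Mu B A *\<^sub>v (y @\<^sub>v u @\<^sub>v l) =
    (My *\<^sub>v y + A *\<^sub>v l) @\<^sub>v (Mu *\<^sub>v u - transpose_mat B *\<^sub>v l) @\<^sub>v (A *\<^sub>v y - B *\<^sub>v u)"
proof -
  have BT: "transpose_mat B \<in> carrier_mat n n" using B by simp
  have top: "four_block_mat (0\<^sub>m n n) A (0\<^sub>m 0 n) (0\<^sub>m 0 n) *\<^sub>v (u @\<^sub>v l) = A *\<^sub>v l"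
    using four_block_mat_mult_vec[of _ n n _ n _ 0, OF _ A _ _ u l] A u l by simp
  have left: "(0\<^sub>m n n @\<^sub>r A) *\<^sub>v y = 0\<^sub>v n @\<^sub>v A *\<^sub>v y"
    using mat_mult_append[of _ n n, OF _ A y] y by simp
  have right: "four_block_mat Mu (- transpose_mat B) (- B) (0\<^sub>m n n) *\<^sub>v (u @\<^sub>v l)
      = (Mu *\<^sub>v u - transpose_mat B *\<^sub>v l) @\<^sub>v - (B *\<^sub>v u)"
    using four_block_mat_mult_vec[of _ n n _ n _ n, OF Mu _ _ _ u l] Mu BT B u l
    by (simp add: minus_add_uminus_vec[of _ n])
  have "kkt_mat n My Mu B A *\<^sub>v (y @\<^sub>v u @\<^sub>v l) =
      (My *\<^sub>v y + A *\<^sub>v l) @\<^sub>v ((0\<^sub>v n @\<^sub>v A *\<^sub>v y) + ((Mu *\<^sub>v u - transpose_mat B *\<^sub>v l) @\<^sub>v - (B *\<^sub>v u)))"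
    unfolding kkt_mat_def top[symmetric] left[symmetric] right[symmetric]
    using A B BT My Mu y u l by (intro four_block_mat_mult_vec[of _ n n _ "n + n" _ "n + n"]) auto
  also have "\<dots> = (My *\<^sub>v y + A *\<^sub>v l) @\<^sub>v (Mu *\<^sub>v u - transpose_mat B *\<^sub>v l) @\<^sub>v (A *\<^sub>v y - B *\<^sub>v u)"
    using A B BT Mu y u l by (simp add: append_vec_add[of _ n _ _ n] minus_add_uminus_vec[of _ n])
  finally show ?thesis .
qed

lemma kkt_homogeneous_solution_zero:
  assumes My: "spd_mat n My" and Mu: "spd_mat n Mu" and B: "B \<in> carrier_mat n n"
    and A: "A \<in> carrier_mat n n" and A_sym: "transpose_mat A = A" and A_inv: "invertible_mat A"
    and y: "y \<in> carrier_vec n" and u: "u \<in> carrier_vec n" and l: "l \<in> carrier_vec n"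
    and eq1: "My *\<^sub>v y + A *\<^sub>v l = 0\<^sub>v n"
    and eq2: "Mu *\<^sub>v u = transpose_mat B *\<^sub>v l"
    and eq3: "A *\<^sub>v y = B *\<^sub>v u"
  shows "y = 0\<^sub>v n \<and> u = 0\<^sub>v n \<and> l = 0\<^sub>v n"
proof -
  have My_carrier: "My \<in> carrier_mat n n" using My by (simp add: spd_mat_def)
  have "y \<bullet> (A *\<^sub>v l) = (A *\<^sub>v y) \<bullet> l"
    using transpose_vec_mult_scalar[OF A l y] A_sym by simp
  also have "\<dots> = l \<bullet> (B *\<^sub>v u)" using eq3 B u l by (simp add: comm_scalar_prod[of _ n])
  also have "\<dots> = (transpose_mat B *\<^sub>v l) \<bullet> u" using transpose_vec_mult_scalar[OF B u l] by simp
  also have "\<dots> = u \<bullet> (Mu *\<^sub>v u)"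
    using eq2 B u l by (simp add: comm_scalar_prod[of _ n])
  finally have coupling: "y \<bullet> (A *\<^sub>v l) = u \<bullet> (Mu *\<^sub>v u)" .
  have "y \<bullet> (My *\<^sub>v y) + y \<bullet> (A *\<^sub>v l) = y \<bullet> (My *\<^sub>v y + A *\<^sub>v l)"
    using My_carrier A y l by (simp add: scalar_prod_add_distrib[of _ n])
  also have "\<dots> = 0" using eq1 y by simp
  finally have energy: "y \<bullet> (My *\<^sub>v y) + u \<bullet> (Mu *\<^sub>v u) = 0" using coupling by simp
  have "y \<bullet> (My *\<^sub>v y) = 0" "u \<bullet> (Mu *\<^sub>v u) = 0"
    using energy spd_mat_quadratic_form_nonneg[OF My y] spd_mat_quadratic_form_nonneg[OF Mu u]
    by linarith+
  then have y0: "y = 0\<^sub>v n" and u0: "u = 0\<^sub>v n"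
    using spd_mat_quadratic_form_eq_zero My Mu y u by blast+
  have "A *\<^sub>v l = 0\<^sub>v n" using eq1 y0 My_carrier A l by auto
  then have "l = 0\<^sub>v n" using invertible_mat_mult_vec_eq_zero[OF A A_inv l] by blast
  with y0 u0 show ?thesis by blast
qed

lemma kkt_mat_mult_vec_eq_zero:
  assumes My: "spd_mat n My" and Mu: "spd_mat n Mu" and B: "B \<in> carrier_mat n n"
    and A: "A \<in> carrier_mat n n" and A_sym: "transpose_mat A = A" and A_inv: "invertible_mat A"
    and v: "v \<in> carrier_vec (3 * n)" and Kv: "kkt_mat n My Mu B A *\<^sub>v v = 0\<^sub>v (3 * n)"
  shows "v = 0\<^sub>v (3 * n)"
proof -
  have My_carrier: "My \<in> carrier_mat n n" and Mu_carrier: "Mu \<in> carrier_mat n n"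
    using My Mu by (simp_all add: spd_mat_def)
  define y where "y = vec_first v n"
  define u where "u = vec_first (vec_last v (n + n)) n"
  define l where "l = vec_last (vec_last v (n + n)) n"
  have yul: "y \<in> carrier_vec n" "u \<in> carrier_vec n" "l \<in> carrier_vec n"
    by (simp_all add: y_def u_def l_def)
  have three_n: "3 * n = n + (n + n)" by simp
  with v have "v \<in> carrier_vec (n + (n + n))" by simp
  then have v_split: "v = y @\<^sub>v u @\<^sub>v l"
    unfolding y_def u_def l_def by (simp add: vec_first_last_append)
  have zero_split: "0\<^sub>v (3 * n) = 0\<^sub>v n @\<^sub>v 0\<^sub>v n @\<^sub>v (0\<^sub>v n :: real vec)"
    by (simp add: zero_vec_append_vec three_n)
  have "(My *\<^sub>v y + A *\<^sub>v l) @\<^sub>v (Mu *\<^sub>v u - transpose_mat B *\<^sub>v l)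
      @\<^sub>v (A *\<^sub>v y - B *\<^sub>v u) = 0\<^sub>v n @\<^sub>v 0\<^sub>v n @\<^sub>v 0\<^sub>v n"
    using Kv kkt_mat_mult_vec[OF My_carrier Mu_carrier B A yul] by (simp only: v_split zero_split)
  then have "My *\<^sub>v y + A *\<^sub>v l = 0\<^sub>v n" "Mu *\<^sub>v u = transpose_mat B *\<^sub>v l" "A *\<^sub>v y = B *\<^sub>v u"
    using yul My_carrier Mu_carrier A B
    by (simp_all add: append_vec_eq[of _ n] minus_vec_eq_zero_iff[of _ n])
  then have "y = 0\<^sub>v n \<and> u = 0\<^sub>v n \<and> l = 0\<^sub>v n"
    using kkt_homogeneous_solution_zero[OF My Mu B A A_sym A_inv yul] by blast
  then show ?thesis by (simp add: v_split zero_split)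
qed

definition affine_interp ::
  "(real \<Rightarrow> real \<Rightarrow> real \<Rightarrow> real vec) \<Rightarrow> real \<Rightarrow> real \<Rightarrow> real \<Rightarrow> real vec" where
  "affine_interp s p q r =
     s 0 0 0 + p \<cdot>\<^sub>v (s 1 0 0 - s 0 0 0) + q \<cdot>\<^sub>v (s 0 1 0 - s 0 0 0) + r \<cdot>\<^sub>v (s 0 0 1 - s 0 0 0)"

lemma affine_interp_carrier:
  assumes "s 0 0 0 \<in> carrier_vec n" "s 1 0 0 \<in> carrier_vec n" "s 0 1 0 \<in> carrier_vec n" "s 0 0 1 \<in> carrier_vec n"
  shows "affine_interp s p q r \<in> carrier_vec n"
  using assms by (simp add: affine_interp_def)

lemma mult_mat_vec_affine_interp:
  assumes M: "M \<in> carrier_mat m n"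
    and "s 0 0 0 \<in> carrier_vec n" "s 1 0 0 \<in> carrier_vec n" "s 0 1 0 \<in> carrier_vec n" "s 0 0 1 \<in> carrier_vec n"
  shows "M *\<^sub>v affine_interp s p q r = affine_interp (\<lambda>a b c. M *\<^sub>v s a b c) p q r"
  using assms
  by (intro eq_vecI) (simp_all add: affine_interp_def mult_add_distrib_mat_vec[OF M]
      mult_minus_distrib_mat_vec[OF M] mult_mat_vec[OF M])

lemma affine_interp_affine:
  assumes "f0 \<in> carrier_vec n" "f1 \<in> carrier_vec n" "f2 \<in> carrier_vec n" "f3 \<in> carrier_vec n"
  shows "affine_interp (\<lambda>p q r. f0 + p \<cdot>\<^sub>v f1 + q \<cdot>\<^sub>v f2 + r \<cdot>\<^sub>v f3) p q r
    = f0 + p \<cdot>\<^sub>v f1 + q \<cdot>\<^sub>v f2 + r \<cdot>\<^sub>v (f3 :: real vec)"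
  using assms by (intro eq_vecI) (simp_all add: affine_interp_def algebra_simps)

lemma unique_solution_eq_affine_interp:
  assumes K: "K \<in> carrier_mat m n"
    and K_inj: "\<And>v. v \<in> carrier_vec n \<Longrightarrow> K *\<^sub>v v = 0\<^sub>v m \<Longrightarrow> v = 0\<^sub>v n"
    and P: "0 \<in> P" "1 \<in> P"
    and s: "\<And>p q r. p \<in> P \<Longrightarrow> q \<in> P \<Longrightarrow> r \<in> P \<Longrightarrow> s p q r \<in> carrier_vec n"
    and f: "f0 \<in> carrier_vec m" "f1 \<in> carrier_vec m" "f2 \<in> carrier_vec m" "f3 \<in> carrier_vec m"
    and Ks: "\<And>p q r. p \<in> P \<Longrightarrow> q \<in> P \<Longrightarrow> r \<in> P \<Longrightarrow>
      K *\<^sub>v s p q r = f0 + p \<cdot>\<^sub>v f1 + q \<cdot>\<^sub>v f2 + r \<cdot>\<^sub>v f3"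
    and pqr: "p \<in> P" "q \<in> P" "r \<in> P"
  shows "s p q r = affine_interp s p q r"
proof -
  have vertices: "s 0 0 0 \<in> carrier_vec n" "s 1 0 0 \<in> carrier_vec n"
    "s 0 1 0 \<in> carrier_vec n" "s 0 0 1 \<in> carrier_vec n"
    using s P by auto
  note interp = affine_interp_carrier[OF vertices, of p q r]
  have "K *\<^sub>v affine_interp s p q r = affine_interp (\<lambda>a b c. K *\<^sub>v s a b c) p q r"
    by (rule mult_mat_vec_affine_interp[OF K vertices])
  also have "\<dots> = affine_interp (\<lambda>a b c. f0 + a \<cdot>\<^sub>v f1 + b \<cdot>\<^sub>v f2 + c \<cdot>\<^sub>v f3) p q r"
    using Ks P by (simp add: affine_interp_def)
  also have "\<dots> = K *\<^sub>v s p q r"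
    using affine_interp_affine[OF f] Ks[OF pqr] by simp
  finally have K_diff: "K *\<^sub>v (s p q r - affine_interp s p q r) = 0\<^sub>v m"
    using K s[OF pqr] interp by (simp add: mult_minus_distrib_mat_vec[OF K])
  have "s p q r - affine_interp s p q r = 0\<^sub>v n"
    using K_inj[OF _ K_diff] s[OF pqr] interp by simp
  then show ?thesis using minus_vec_eq_zero_iff[OF s[OF pqr] interp] by simp
qed

lemma kkt_solution_eq_affine_interp:
  fixes y u l :: "real \<Rightarrow> real \<Rightarrow> real \<Rightarrow> real vec"
  assumes My: "spd_mat n My" and Mu: "spd_mat n Mu" and B: "B \<in> carrier_mat n n"
    and A: "A \<in> carrier_mat n n" and A_sym: "transpose_mat A = A" and A_inv: "invertible_mat A"
    and P: "0 \<in> P" "1 \<in> P"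
    and yul: "\<And>p q r. p \<in> P \<Longrightarrow> q \<in> P \<Longrightarrow> r \<in> P \<Longrightarrow>
      y p q r \<in> carrier_vec n \<and> u p q r \<in> carrier_vec n \<and> l p q r \<in> carrier_vec n"
    and a: "a \<in> carrier_vec n"
    and rhs: "c \<in> carrier_vec n" "dp \<in> carrier_vec n" "dq \<in> carrier_vec n" "dr \<in> carrier_vec n"
    and eq1: "\<And>p q r. p \<in> P \<Longrightarrow> q \<in> P \<Longrightarrow> r \<in> P \<Longrightarrow> My *\<^sub>v y p q r + A *\<^sub>v l p q r = a"
    and eq2: "\<And>p q r. p \<in> P \<Longrightarrow> q \<in> P \<Longrightarrow> r \<in> P \<Longrightarrow>
      Mu *\<^sub>v u p q r - transpose_mat B *\<^sub>v l p q r = 0\<^sub>v n"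
    and eq3: "\<And>p q r. p \<in> P \<Longrightarrow> q \<in> P \<Longrightarrow> r \<in> P \<Longrightarrow>
      A *\<^sub>v y p q r - B *\<^sub>v u p q r = c + p \<cdot>\<^sub>v dp + q \<cdot>\<^sub>v dq + r \<cdot>\<^sub>v dr"
    and pqr: "p \<in> P" "q \<in> P" "r \<in> P"
  shows "y p q r @\<^sub>v u p q r @\<^sub>v l p q r
    = affine_interp (\<lambda>p q r. y p q r @\<^sub>v u p q r @\<^sub>v l p q r) p q r"
proof (rule unique_solution_eq_affine_interp[where K = "kkt_mat n My Mu B A" and P = P
      and s = "\<lambda>p q r. y p q r @\<^sub>v u p q r @\<^sub>v l p q r"])
  have My_carrier: "My \<in> carrier_mat n n" and Mu_carrier: "Mu \<in> carrier_mat n n"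
    using My Mu by (simp_all add: spd_mat_def)
  show "kkt_mat n My Mu B A \<in> carrier_mat (3 * n) (3 * n)"
    by (rule kkt_mat_carrier[OF My_carrier Mu_carrier B A])
  show "v = 0\<^sub>v (3 * n)"
    if "v \<in> carrier_vec (3 * n)" "kkt_mat n My Mu B A *\<^sub>v v = 0\<^sub>v (3 * n)" for v
    by (rule kkt_mat_mult_vec_eq_zero[OF My Mu B A A_sym A_inv that])
  show "kkt_mat n My Mu B A *\<^sub>v (y p q r @\<^sub>v u p q r @\<^sub>v l p q r)
      = (a @\<^sub>v 0\<^sub>v n @\<^sub>v c) + p \<cdot>\<^sub>v (0\<^sub>v n @\<^sub>v 0\<^sub>v n @\<^sub>v dp)
        + q \<cdot>\<^sub>v (0\<^sub>v n @\<^sub>v 0\<^sub>v n @\<^sub>v dq) + r \<cdot>\<^sub>v (0\<^sub>v n @\<^sub>v 0\<^sub>v n @\<^sub>v dr)"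
    if "p \<in> P" "q \<in> P" "r \<in> P" for p q r
  proof -
    have "kkt_mat n My Mu B A *\<^sub>v (y p q r @\<^sub>v u p q r @\<^sub>v l p q r)
        = a @\<^sub>v 0\<^sub>v n @\<^sub>v (c + p \<cdot>\<^sub>v dp + q \<cdot>\<^sub>v dq + r \<cdot>\<^sub>v dr)"
      using yul[OF that]
      by (simp only: kkt_mat_mult_vec[OF My_carrier Mu_carrier B A]
          eq1[OF that] eq2[OF that] eq3[OF that])
    also have "\<dots> = (a @\<^sub>v 0\<^sub>v n @\<^sub>v c) + p \<cdot>\<^sub>v (0\<^sub>v n @\<^sub>v 0\<^sub>v n @\<^sub>v dp)
        + q \<cdot>\<^sub>v (0\<^sub>v n @\<^sub>v 0\<^sub>v n @\<^sub>v dq) + r \<cdot>\<^sub>v (0\<^sub>v n @\<^sub>v 0\<^sub>v n @\<^sub>v dr)"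
      using a rhs by (intro append3_vec_affine_comb) auto
    finally show ?thesis .
  qed
qed (use P yul a rhs pqr in \<open>auto intro: append3_carrier_vec\<close>)

definition affine_interp_cols :: "(real \<Rightarrow> real \<Rightarrow> real \<Rightarrow> real vec) \<Rightarrow> real vec list" where
  "affine_interp_cols s = [s 0 0 0, s 1 0 0 - s 0 0 0, s 0 1 0 - s 0 0 0, s 0 0 1 - s 0 0 0]"

lemma mat_of_affine_interp_cols_carrier: "mat_of_cols n (affine_interp_cols s) \<in> carrier_mat n 4"
  using mat_of_cols_carrier(1)[of n "affine_interp_cols s"]
  by (simp add: affine_interp_cols_def numeral_eq_Suc)

definition tt_core2 :: "real \<Rightarrow> real mat" where
  "tt_core2 p = mat_of_rows_list 3 [[1, 0, 0], [p, 0, 0], [0, 1, 0], [0, 0, 1]]"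

definition tt_core3 :: "real \<Rightarrow> real mat" where
  "tt_core3 q = mat_of_rows_list 2 [[1, 0], [q, 0], [0, 1]]"

definition tt_core4 :: "real \<Rightarrow> real mat" where
  "tt_core4 r = mat_of_rows_list 1 [[1], [r]]"

lemma tt_cores_carrier:
  "tt_core2 p \<in> carrier_mat 4 3" "tt_core3 q \<in> carrier_mat 3 2" "tt_core4 r \<in> carrier_mat 2 1"
  by (simp_all add: tt_core2_def tt_core3_def tt_core4_def mat_of_rows_list_def numeral_eq_Suc)

lemma tt_cores_mult:
  "tt_core2 p * tt_core3 q * tt_core4 r = mat_of_cols 4 [vec_of_list [1, p, q, r]]"
  by (rule eq_matI)
    (auto simp: tt_core2_def tt_core3_def tt_core4_def mat_of_rows_list_def scalar_prod_def
      mat_of_cols_def less_Suc_eq numeral_eq_Suc lessThan_Suc atLeast0LessThan vec_of_list_index)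

lemma mat_of_cols_4_mult_vec:
  assumes "c0 \<in> carrier_vec n" "c1 \<in> carrier_vec n" "c2 \<in> carrier_vec n" "c3 \<in> carrier_vec n"
  shows "mat_of_cols n [c0, c1, c2, c3] *\<^sub>v vec_of_list [1, p, q, r]
    = c0 + p \<cdot>\<^sub>v c1 + q \<cdot>\<^sub>v c2 + r \<cdot>\<^sub>v (c3 :: real vec)"
  using assms
  by (intro eq_vecI)
    (auto simp: mat_of_cols_def scalar_prod_def numeral_eq_Suc lessThan_Suc atLeast0LessThan vec_of_list_index)

lemma affine_interp_tensor_train:
  assumes "s 0 0 0 \<in> carrier_vec n" "s 1 0 0 \<in> carrier_vec n" "s 0 1 0 \<in> carrier_vec n" "s 0 0 1 \<in> carrier_vec n"
  shows "affine_interp s p q r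
    = col (mat_of_cols n (affine_interp_cols s) * tt_core2 p * tt_core3 q * tt_core4 r) 0"
proof -
  let ?Z = "mat_of_cols n (affine_interp_cols s)"
  note Z = mat_of_affine_interp_cols_carrier[of n s]
  note cores = tt_cores_carrier
  have cores23: "tt_core2 p * tt_core3 q \<in> carrier_mat 4 2"
    using cores(1,2) by (rule mult_carrier_mat)
  have "?Z * tt_core2 p * tt_core3 q * tt_core4 r = ?Z * (tt_core2 p * tt_core3 q) * tt_core4 r"
    by (simp only: assoc_mult_mat[OF Z cores(1,2)])
  also have "\<dots> = ?Z * (tt_core2 p * tt_core3 q * tt_core4 r)"
    by (rule assoc_mult_mat[OF Z cores23 cores(3)])
  also have "\<dots> = ?Z * mat_of_cols 4 [vec_of_list [1, p, q, r]]"
    by (simp only: tt_cores_mult)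
  finally have prod:
    "?Z * tt_core2 p * tt_core3 q * tt_core4 r = ?Z * mat_of_cols 4 [vec_of_list [1, p, q, r]]" .
  have coeffs: "vec_of_list [1, p, q, r] \<in> carrier_vec 4"
    by (simp add: carrier_dim_vec)
  have "col (?Z * tt_core2 p * tt_core3 q * tt_core4 r) 0 = ?Z *\<^sub>v vec_of_list [1, p, q, r]"
    unfolding prod by (rule mat_vec_as_mat_mat_mult[OF Z coeffs, symmetric])
  also have "\<dots> = affine_interp s p q r"
    unfolding affine_interp_cols_def affine_interp_def
    by (rule mat_of_cols_4_mult_vec) (use assms in auto)
  finally show ?thesis by (rule sym)
qed

theorem mainTheorem1:
  fixes N :: nat
    and My Mu B :: "real mat"
    and A :: "real \<Rightarrow> real mat"
    and yd g0 c3 c4 :: "real vec"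
    and g b3 b4 :: "real \<Rightarrow> real vec"
    and y u lam :: "real \<Rightarrow> real \<Rightarrow> real \<Rightarrow> real \<Rightarrow> real vec"
  assumes My: "spd_mat N My"
    and Mu: "spd_mat N Mu"
    and B: "B \<in> carrier_mat N N"
    and A_carrier: "\<And>x1. x1 \<in> I1 \<Longrightarrow> A x1 \<in> carrier_mat N N"
    and A_sym: "\<And>x1. x1 \<in> I1 \<Longrightarrow> transpose_mat (A x1) = A x1"
    and A_inv: "\<And>x1. x1 \<in> I1 \<Longrightarrow> invertible_mat (A x1)"
    and yd: "yd \<in> carrier_vec N"
    and g0: "g0 \<in> carrier_vec N" and c3: "c3 \<in> carrier_vec N" and c4: "c4 \<in> carrier_vec N"
    and g_def: "\<And>x2. g x2 = (x2 / 100) \<cdot>\<^sub>v g0"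
    and b3_def: "\<And>x3. b3 x3 = (- 1 - x3 / 1000) \<cdot>\<^sub>v c3"
    and b4_def: "\<And>x4. b4 x4 = (- (2 + x4) / 1000) \<cdot>\<^sub>v c4"
    and sol_carrier: "\<And>x1 x2 x3 x4. \<lbrakk>x1 \<in> I1; x2 \<in> I1; x3 \<in> I1; x4 \<in> I1\<rbrakk> \<Longrightarrow>
        y x1 x2 x3 x4 \<in> carrier_vec N \<and> u x1 x2 x3 x4 \<in> carrier_vec N \<and> lam x1 x2 x3 x4 \<in> carrier_vec N"
    and eq1: "\<And>x1 x2 x3 x4. \<lbrakk>x1 \<in> I1; x2 \<in> I1; x3 \<in> I1; x4 \<in> I1\<rbrakk> \<Longrightarrow>
        My *\<^sub>v y x1 x2 x3 x4 + A x1 *\<^sub>v lam x1 x2 x3 x4 = My *\<^sub>v yd"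
    and eq2: "\<And>x1 x2 x3 x4. \<lbrakk>x1 \<in> I1; x2 \<in> I1; x3 \<in> I1; x4 \<in> I1\<rbrakk> \<Longrightarrow>
        Mu *\<^sub>v u x1 x2 x3 x4 - transpose_mat B *\<^sub>v lam x1 x2 x3 x4 = 0\<^sub>v N"
    and eq3: "\<And>x1 x2 x3 x4. \<lbrakk>x1 \<in> I1; x2 \<in> I1; x3 \<in> I1; x4 \<in> I1\<rbrakk> \<Longrightarrow>
        A x1 *\<^sub>v y x1 x2 x3 x4 - B *\<^sub>v u x1 x2 x3 x4 = - g x2 - b3 x3 - b4 x4"
  shows "\<exists>(r1::nat) (r2::nat) (r3::nat) (Z1 :: real \<Rightarrow> real mat) (z2 :: real \<Rightarrow> real mat)
            (z3 :: real \<Rightarrow> real mat) (z4 :: real \<Rightarrow> real mat).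
           r1 \<le> 7 \<and> r2 \<le> 7 \<and> r3 \<le> 7 \<and>
           (\<forall>x1 \<in> I1. Z1 x1 \<in> carrier_mat (3 * N) r1) \<and>
           (\<forall>x2 \<in> I1. z2 x2 \<in> carrier_mat r1 r2) \<and>
           (\<forall>x3 \<in> I1. z3 x3 \<in> carrier_mat r2 r3) \<and>
           (\<forall>x4 \<in> I1. z4 x4 \<in> carrier_mat r3 1) \<and>
           (\<forall>x1 \<in> I1. \<forall>x2 \<in> I1. \<forall>x3 \<in> I1. \<forall>x4 \<in> I1.
              y x1 x2 x3 x4 @\<^sub>v u x1 x2 x3 x4 @\<^sub>v lam x1 x2 x3 x4
                = col (Z1 x1 * z2 x2 * z3 x3 * z4 x4) 0)"
proof -
  have My_carrier: "My \<in> carrier_mat N N" using My by (simp add: spd_mat_def)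
  have source: "- g x2 - b3 x3 - b4 x4 = (c3 + (2 / 1000) \<cdot>\<^sub>v c4) + x2 \<cdot>\<^sub>v ((- 1 / 100) \<cdot>\<^sub>v g0)
      + x3 \<cdot>\<^sub>v ((1 / 1000) \<cdot>\<^sub>v c3) + x4 \<cdot>\<^sub>v ((1 / 1000) \<cdot>\<^sub>v c4)" for x2 x3 x4
    using g0 c3 c4 by (intro eq_vecI) (simp_all add: g_def b3_def b4_def field_simps)
  define S where "S x1 = (\<lambda>x2 x3 x4. y x1 x2 x3 x4 @\<^sub>v u x1 x2 x3 x4 @\<^sub>v lam x1 x2 x3 x4)" for x1
  have S_carrier: "S x1 x2 x3 x4 \<in> carrier_vec (3 * N)"
    if "x1 \<in> I1" "x2 \<in> I1" "x3 \<in> I1" "x4 \<in> I1" for x1 x2 x3 x4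
    using sol_carrier[OF that] unfolding S_def by (intro append3_carrier_vec) auto
  have S_affine: "S x1 x2 x3 x4 = affine_interp (S x1) x2 x3 x4"
    if x: "x1 \<in> I1" "x2 \<in> I1" "x3 \<in> I1" "x4 \<in> I1" for x1 x2 x3 x4
    unfolding S_def
    by (rule kkt_solution_eq_affine_interp[where y = "y x1" and u = "u x1" and l = "lam x1"
          and P = I1 and c = "c3 + (2 / 1000) \<cdot>\<^sub>v c4" and dp = "(- 1 / 100) \<cdot>\<^sub>v g0"
          and dq = "(1 / 1000) \<cdot>\<^sub>v c3" and dr = "(1 / 1000) \<cdot>\<^sub>v c4",
          OF My Mu B A_carrier[OF x(1)] A_sym[OF x(1)] A_inv[OF x(1)]])
      (use x sol_carrier eq1 eq2 eq3 source My_carrier yd g0 c3 c4 in auto)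
  have "y x1 x2 x3 x4 @\<^sub>v u x1 x2 x3 x4 @\<^sub>v lam x1 x2 x3 x4
      = col (mat_of_cols (3 * N) (affine_interp_cols (S x1)) * tt_core2 x2 * tt_core3 x3 * tt_core4 x4) 0"
    if x: "x1 \<in> I1" "x2 \<in> I1" "x3 \<in> I1" "x4 \<in> I1" for x1 x2 x3 x4
  proof -
    have "y x1 x2 x3 x4 @\<^sub>v u x1 x2 x3 x4 @\<^sub>v lam x1 x2 x3 x4 = affine_interp (S x1) x2 x3 x4"
      using S_affine[OF x] by (simp only: S_def)
    also have "\<dots> = col (mat_of_cols (3 * N) (affine_interp_cols (S x1))
        * tt_core2 x2 * tt_core3 x3 * tt_core4 x4) 0"
      by (rule affine_interp_tensor_train) (use S_carrier x(1) in auto)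
    finally show ?thesis .
  qed
  then show ?thesis
    using tt_cores_carrier mat_of_affine_interp_cols_carrier
    by (intro exI[of _ 4] exI[of _ 3] exI[of _ 2]
        exI[of _ "\<lambda>x1. mat_of_cols (3 * N) (affine_interp_cols (S x1))"]
        exI[of _ tt_core2] exI[of _ tt_core3] exI[of _ tt_core4]) simp
qed

end
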